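(* Let $G$ and $H$ be two uncountable groups of the same regular cardinality $\gamma$. Then the balleans $\mathcal{B}(G)$ and $\mathcal{B}(H)$ are asymorphic.
   Context: For an infinite group $G$ with identity $e$, $\mathcal{B}(G)=(G,\mathcal{F},B)$ where $\mathcal{F}=\{A\subseteq G: e\in A, |A|<|G|\}$ and $B(g,A)=gA$. For balleans $(X_1,P_1,B_1)$, $(X_2,P_2,B_2)$ (sets with families of balls $B(x,\alpha)\subseteq X$ indexed by $x\in X,\alpha\in P$), a map $f:X_1\to X_2$ is a $\prec$-mapping if for every $\alpha\in P_1$ there is $\beta\in P_2$ with $f(B_1(x,\alpha))\subseteq B_2(f(x),\beta)$ for all $x\in X_1$; a bijection $f$ is an asymorphism if $f$ and $f^{-1}$ are $\prec$-mappings, and the balleans are then called asymorphic. *)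

theory Defs
  imports "HOL-Algebra.Coset" "HOL-Library.Countable_Set"
begin

text \<open>A ballean is given by a support set X, an index set P and a ball function
  B :: point => index => set.\<close>

definition prec_mapping ::
  "'a set \<Rightarrow> 'p set \<Rightarrow> ('a \<Rightarrow> 'p \<Rightarrow> 'a set) \<Rightarrow>
   'b set \<Rightarrow> 'q set \<Rightarrow> ('b \<Rightarrow> 'q \<Rightarrow> 'b set) \<Rightarrow> ('a \<Rightarrow> 'b) \<Rightarrow> bool" where
  "prec_mapping X1 P1 B1 X2 P2 B2 f \<longleftrightarrow>
     (\<forall>\<alpha>\<in>P1. \<exists>\<beta>\<in>P2. \<forall>x\<in>X1. f ` (B1 x \<alpha>) \<subseteq> B2 (f x) \<beta>)"

definition asymorphism ::
  "'a set \<Rightarrow> 'p set \<Rightarrow> ('a \<Rightarrow> 'p \<Rightarrow> 'a set) \<Rightarrow>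
   'b set \<Rightarrow> 'q set \<Rightarrow> ('b \<Rightarrow> 'q \<Rightarrow> 'b set) \<Rightarrow> ('a \<Rightarrow> 'b) \<Rightarrow> bool" where
  "asymorphism X1 P1 B1 X2 P2 B2 f \<longleftrightarrow>
     bij_betw f X1 X2 \<and> prec_mapping X1 P1 B1 X2 P2 B2 f
     \<and> prec_mapping X2 P2 B2 X1 P1 B1 (inv_into X1 f)"

definition asymorphic ::
  "'a set \<Rightarrow> 'p set \<Rightarrow> ('a \<Rightarrow> 'p \<Rightarrow> 'a set) \<Rightarrow>
   'b set \<Rightarrow> 'q set \<Rightarrow> ('b \<Rightarrow> 'q \<Rightarrow> 'b set) \<Rightarrow> bool" where
  "asymorphic X1 P1 B1 X2 P2 B2 \<longleftrightarrow> (\<exists>f. asymorphism X1 P1 B1 X2 P2 B2 f)"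

definition group_ballean_F :: "('a, 'm) monoid_scheme \<Rightarrow> 'a set set" where
  "group_ballean_F G = {A. A \<subseteq> carrier G \<and> \<one>\<^bsub>G\<^esub> \<in> A \<and>
                         (card_of A, card_of (carrier G)) \<in> ordLess}"

definition group_ballean_B :: "('a, 'm) monoid_scheme \<Rightarrow> 'a \<Rightarrow> 'a set \<Rightarrow> 'a set" where
  "group_ballean_B G g A = g <#\<^bsub>G\<^esub> A"

definition group_balleans_asymorphic ::
  "('a, 'm) monoid_scheme \<Rightarrow> ('b, 'n) monoid_scheme \<Rightarrow> bool" where
  "group_balleans_asymorphic G H \<longleftrightarrow>
     asymorphic (carrier G) (group_ballean_F G) (group_ballean_B G)
                (carrier H) (group_ballean_F H) (group_ballean_B H)"

end

theory Submission
  imports Defs "HOL-Algebra.Generated_Groups"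
begin

text \<open>Let \<gamma> be the common cardinality. Both groups are exhausted by chains of subgroups of size
  less than \<gamma>, built in lockstep together with a bijection f between the groups that maps the
  left cosets of each member K of the chain in G onto the left cosets of the matching member L
  in H. By regularity every subset A of G with |A| < \<gamma> lies in some K, so f maps the ball xA
  into the ball f(x)L, and symmetrically for the inverse of f.

  The chains are obtained by Zorn's lemma. In the extension step, small subgroups D \<le> D' and
  E \<le> E' are chosen with equally many cosets of D in D' and of E in E'; matching these cosets
  and translating f along them extends f. Since each step swallows the least element (in an
  initial well-order of type \<gamma>) outside the current subgroup, a maximal chain has fewer than
  \<gamma> members below any missing element, hence exhausts the group.\<close>

unbundle cardinal_syntax

section \<open>Cardinal arithmetic\<close>

lemma finite_card_of_ordLess_infinite: "finite A \<Longrightarrow> infinite X \<Longrightarrow> |A| <o |X|"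
  by (rule finite_ordLess_infinite[OF card_of_Well_order card_of_Well_order]) (auto simp: Field_card_of)

lemma nat_card_of_ordLess_if_uncountable: "\<not> countable A \<Longrightarrow> |UNIV :: nat set| <o |A|"
  by (metis card_of_Well_order card_of_ordLeq countableI not_ordLeq_iff_ordLess)

lemma card_of_insert_ordLeq_infinite:
  assumes "infinite C" "|A| \<le>o |C|"
  shows "|insert a A| \<le>o |C|"
proof -
  have "|{a}| \<le>o |C|" by (rule card_of_singl_ordLeq) (use assms(1) in auto)
  then have "|{a} \<union> A| \<le>o |C|"
    by (rule card_of_Un_ordLeq_infinite_Field[of "|C|", unfolded Field_card_of,
          OF assms(1) _ assms(2) card_of_card_order_on])
  then show ?thesis by simp
qed

definition least_outside :: "'a set \<Rightarrow> 'a set \<Rightarrow> 'a" where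
  "least_outside X K = wo_rel.minim (card_of X) (X - K)"

lemma least_outside_mem:
  assumes "\<not> X \<subseteq> K"
  shows "least_outside X K \<in> X - K"
proof -
  have "wo_rel |X|" unfolding wo_rel_def by (rule card_of_Well_order)
  then show ?thesis
    unfolding least_outside_def using assms wo_rel.minim_in[of "|X|" "X - K"]
    by (auto simp: Field_card_of)
qed

lemma least_outside_mem_if_ordLess:
  assumes "A \<subseteq> X" "|A| <o |X|"
  shows "least_outside X A \<in> X - A"
proof (rule least_outside_mem)
  show "\<not> X \<subseteq> A"
  proof
    assume "X \<subseteq> A"
    then have "A = X" using assms(1) by blast
    then show False using assms(2) ordLess_irreflexive by metis
  qed
qed

lemma least_outside_least:
  assumes "y \<in> X - K"
  shows "(least_outside X K, y) \<in> |X|"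
proof -
  have "wo_rel |X|" unfolding wo_rel_def by (rule card_of_Well_order)
  then show ?thesis
    unfolding least_outside_def using assms wo_rel.minim_least[of "|X|" "X - K" y]
    by (simp add: Field_card_of)
qed

text \<open>Distinct members of the chain have distinct least elements outside them, all of which
  lie below the least element outside the union; so there are fewer than |X| members.\<close>

lemma card_of_Union_chain_ordLess:
  assumes stable: "stable |X|" and infinite: "infinite X"
    and small: "\<And>K. K \<in> Ks \<Longrightarrow> K \<subseteq> X \<and> |K| <o |X|"
    and chain: "chain\<^sub>\<subseteq> Ks"
    and least: "\<And>K K'. K \<in> Ks \<Longrightarrow> K' \<in> Ks \<Longrightarrow> K \<subset> K' \<Longrightarrow> least_outside X K \<in> K'"
    and proper: "\<Union>Ks \<noteq> X"
  shows "|\<Union>Ks| <o |X|"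
proof -
  define m where "m = least_outside X (\<Union>Ks)"
  have "\<not> X \<subseteq> \<Union>Ks" using small proper by blast
  then have m: "m \<in> X - \<Union>Ks" unfolding m_def by (rule least_outside_mem)
  have outside: "least_outside X K \<in> X - K" if "K \<in> Ks" for K
    using least_outside_mem_if_ordLess small[OF that] by blast
  have "least_outside X ` Ks \<subseteq> insert m (underS (card_of X) m)"
  proof
    fix z assume "z \<in> least_outside X ` Ks"
    then obtain K where K: "K \<in> Ks" and z: "z = least_outside X K" by blast
    have "m \<in> X - K" using m K by blast
    then have "(z, m) \<in> |X|" unfolding z by (rule least_outside_least)
    then show "z \<in> insert m (underS (card_of X) m)" unfolding underS_def by simp
  qed
  moreover have "inj_on (least_outside X) Ks"
  proof (rule inj_onI)
    fix K K' assume K: "K \<in> Ks" "K' \<in> Ks" and eq: "least_outside X K = least_outside X K'"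
    show "K = K'"
    proof (rule ccontr)
      assume "K \<noteq> K'"
      then have "K \<subset> K' \<or> K' \<subset> K" using chain K unfolding chain_subset_def by blast
      then show False using least[OF K] least[OF K(2,1)] outside[OF K(1)] outside[OF K(2)] eq by auto
    qed
  qed
  ultimately have "|Ks| \<le>o |insert m (underS (card_of X) m)|"
    by (intro card_of_ordLeqI[of "least_outside X"]) auto
  moreover have "|insert m (underS (card_of X) m)| <o |X|"
  proof -
    have "m \<in> Field |X|" using m by (simp add: Field_card_of)
    then have "|underS (card_of X) m| <o |X|" by (rule card_of_underS[OF card_of_Card_order])
    moreover have "|{m}| <o |X|" by (rule finite_card_of_ordLess_infinite) (simp_all add: infinite)
    ultimately have "|{m} \<union> underS (card_of X) m| <o |X|"
      using card_of_Un_ordLess_infinite[OF infinite] by blast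
    then show ?thesis by simp
  qed
  ultimately have "|Ks| <o |X|" by (rule ordLeq_ordLess_trans)
  then have "|\<Union>K\<in>Ks. K| <o |X|"
    by (rule stable_UNION[OF stable]) (use small in blast)
  then show ?thesis by simp
qed

lemma chain_member_containing_small_set:
  assumes stable: "stable |X|"
    and small: "\<And>K. K \<in> Ks \<Longrightarrow> |K| <o |X|"
    and chain: "chain\<^sub>\<subseteq> Ks" and cover: "\<Union>Ks = X"
    and A: "A \<subseteq> X" "|A| <o |X|"
  shows "\<exists>K\<in>Ks. A \<subseteq> K"
proof (rule ccontr)
  assume no_member: "\<not> (\<exists>K\<in>Ks. A \<subseteq> K)"
  have "\<forall>a\<in>A. \<exists>K. K \<in> Ks \<and> a \<in> K" using A(1) cover by blast
  then obtain member where member: "\<forall>a\<in>A. member a \<in> Ks \<and> a \<in> member a"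
    by (rule bchoice[elim_format]) blast
  have "X \<subseteq> (\<Union>a\<in>A. member a)"
  proof
    fix x assume "x \<in> X"
    then have "x \<in> \<Union>Ks" using cover by simp
    then obtain K where K: "K \<in> Ks" "x \<in> K" by blast
    then obtain a where "a \<in> A" "a \<notin> K" using no_member by blast
    moreover have "member a \<in> Ks" "a \<in> member a" using member \<open>a \<in> A\<close> by auto
    ultimately have "K \<subseteq> member a"
      using chain K(1) unfolding chain_subset_def by blast
    then show "x \<in> (\<Union>a\<in>A. member a)" using K(2) \<open>a \<in> A\<close> by blast
  qed
  then have "|X| \<le>o |\<Union>a\<in>A. member a|" by (rule card_of_mono1)
  moreover have "|\<Union>a\<in>A. member a| <o |X|"
    by (rule stable_UNION[OF stable A(2)]) (use member small in blast)
  ultimately have "|X| <o |X|" by (rule ordLeq_ordLess_trans)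
  then show False using ordLess_irreflexive by blast
qed

lemma bij_betw_fixing_point:
  assumes "bij_betw c A B" "a \<in> A" "b \<in> B"
  obtains c' where "bij_betw c' A B" "c' a = b"
proof -
  define swap where "swap y = (if y = c a then b else if y = b then c a else y)" for y
  have "c a \<in> B" using bij_betwE[OF assms(1)] assms(2) by blast
  have "bij_betw swap B B"
    by (rule bij_betw_byWitness[where f' = swap]) (use \<open>c a \<in> B\<close> assms(3) in \<open>auto simp: swap_def\<close>)
  then have "bij_betw (swap \<circ> c) A B" using assms(1) bij_betw_trans by blast
  moreover have "(swap \<circ> c) a = b" by (simp add: swap_def)
  ultimately show thesis using that by blast
qed

section \<open>Cosets and small subgroups\<close>

context group
begin

lemma l_coset_mem_iff:
  assumes "subgroup D G" "x \<in> carrier G"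
  shows "y \<in> x <# D \<longleftrightarrow> y \<in> carrier G \<and> inv x \<otimes> y \<in> D"
  using assms unfolding l_coset_def
  by (auto simp: subgroup.mem_carrier m_assoc[symmetric] intro!: bexI[where x = "inv x \<otimes> y"])

lemma l_coset_eq_iff:
  assumes "subgroup D G" "x \<in> carrier G" "y \<in> carrier G"
  shows "x <# D = y <# D \<longleftrightarrow> inv x \<otimes> y \<in> D"
proof
  assume "x <# D = y <# D"
  then have "y \<in> x <# D"
    using assms l_coset_mem_iff subgroup.one_closed by fastforce
  then show "inv x \<otimes> y \<in> D" using l_coset_mem_iff assms by blast
next
  assume "inv x \<otimes> y \<in> D"
  then have "y \<in> x <# D" using l_coset_mem_iff assms by blast
  then show "x <# D = y <# D" using l_repr_independence assms by blast
qed

lemma card_of_l_coset: "|x <# D| \<le>o |D|"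
proof -
  have "x <# D = (\<otimes>) x ` D" unfolding l_coset_def by auto
  then show ?thesis by (simp add: card_of_image)
qed

lemma subgroup_Union_chain:
  assumes "Ks \<noteq> {}" and chain: "chain\<^sub>\<subseteq> Ks" and sub: "\<And>K. K \<in> Ks \<Longrightarrow> subgroup K G"
  shows "subgroup (\<Union>Ks) G"
proof (rule subgroupI)
  show "\<Union>Ks \<subseteq> carrier G" using sub subgroup.subset by (metis Sup_least)
  obtain K where "K \<in> Ks" using assms(1) by blast
  then have "\<one> \<in> \<Union>Ks" using sub subgroup.one_closed by (metis UnionI)
  then show "\<Union>Ks \<noteq> {}" by blast
  show "inv a \<in> \<Union>Ks" if a: "a \<in> \<Union>Ks" for a
  proof -
    obtain K where "K \<in> Ks" "a \<in> K" using a by blast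
    then show ?thesis using sub subgroup.m_inv_closed by (metis UnionI)
  qed
  show "a \<otimes> b \<in> \<Union>Ks" if ab: "a \<in> \<Union>Ks" "b \<in> \<Union>Ks" for a b
  proof -
    obtain K K' where K: "K \<in> Ks" "a \<in> K" and K': "K' \<in> Ks" "b \<in> K'" using ab by blast
    have "K \<subseteq> K' \<or> K' \<subseteq> K" using chain K(1) K'(1) unfolding chain_subset_def by blast
    then show ?thesis
    proof
      assume "K \<subseteq> K'"
      then have "a \<otimes> b \<in> K'" using K(2) K'(2) subgroup.m_closed[OF sub[OF K'(1)]] by blast
      then show ?thesis using K'(1) by blast
    next
      assume "K' \<subseteq> K"
      then have "a \<otimes> b \<in> K" using K(2) K'(2) subgroup.m_closed[OF sub[OF K(1)]] by blast
      then show ?thesis using K(1) by blast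
    qed
  qed
qed

end

primrec generate_level :: "('a, 'm) monoid_scheme \<Rightarrow> 'a set \<Rightarrow> nat \<Rightarrow> 'a set" where
  "generate_level G S 0 = insert \<one>\<^bsub>G\<^esub> S"
| "generate_level G S (Suc n) =
     (\<lambda>(x, y). x \<otimes>\<^bsub>G\<^esub> inv\<^bsub>G\<^esub> y) ` (generate_level G S n \<times> generate_level G S n)"

context group
begin

lemma generate_level_carrier: "S \<subseteq> carrier G \<Longrightarrow> generate_level G S n \<subseteq> carrier G"
  by (induction n) auto

lemma one_in_generate_level: "\<one> \<in> generate_level G S n"
proof (induction n)
  case (Suc n)
  then have "\<one> \<otimes> inv \<one> \<in> generate_level G S (Suc n)"
    unfolding generate_level.simps by (intro rev_image_eqI[of "(\<one>, \<one>)"]) auto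
  then show ?case by simp
qed simp

lemma generate_level_mono:
  assumes "S \<subseteq> carrier G" "n \<le> m"
  shows "generate_level G S n \<subseteq> generate_level G S m"
proof (rule lift_Suc_mono_le[of "generate_level G S", OF _ assms(2)])
  fix n
  show "generate_level G S n \<subseteq> generate_level G S (Suc n)"
  proof
    fix x assume x: "x \<in> generate_level G S n"
    have "x \<otimes> inv \<one> \<in> generate_level G S (Suc n)"
      unfolding generate_level.simps
      by (rule rev_image_eqI[of "(x, \<one>)"]) (use x one_in_generate_level in auto)
    moreover have "x \<in> carrier G" using generate_level_carrier[OF assms(1)] x by blast
    then have "x \<otimes> inv \<one> = x" by simp
    ultimately show "x \<in> generate_level G S (Suc n)" by metis
  qed
qed

lemma subgroup_Union_generate_level:
  assumes "S \<subseteq> carrier G"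
  shows "subgroup (\<Union>n. generate_level G S n) G"
proof -
  let ?U = "\<Union>n. generate_level G S n"
  have carrier: "?U \<subseteq> carrier G" using generate_level_carrier[OF assms] by blast
  have closed: "a \<otimes> inv b \<in> ?U" if ab: "a \<in> ?U" "b \<in> ?U" for a b
  proof -
    obtain n m where "a \<in> generate_level G S n" "b \<in> generate_level G S m" using ab by blast
    then have "a \<in> generate_level G S (max n m)" "b \<in> generate_level G S (max n m)"
      using generate_level_mono[OF assms] by (meson max.cobounded1 max.cobounded2 subsetD)+
    then have "a \<otimes> inv b \<in> generate_level G S (Suc (max n m))"
      unfolding generate_level.simps by (intro rev_image_eqI[of "(a, b)"]) auto
    then show ?thesis by blast
  qed
  have one: "\<one> \<in> ?U" using one_in_generate_level by blast
  have inv: "inv a \<in> ?U" if "a \<in> ?U" for a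
  proof -
    have "a \<in> carrier G" using carrier that by blast
    then have "\<one> \<otimes> inv a = inv a" by simp
    then show ?thesis using closed[OF one that] by metis
  qed
  show ?thesis
  proof (rule subgroupI)
    show "a \<otimes> b \<in> ?U" if "a \<in> ?U" "b \<in> ?U" for a b
    proof -
      have "b \<in> carrier G" using carrier that(2) by blast
      then have "a \<otimes> inv (inv b) = a \<otimes> b" by simp
      then show ?thesis using closed[OF that(1) inv[OF that(2)]] by metis
    qed
  qed (use carrier one inv in auto)
qed

lemma card_of_generate_level:
  assumes "S \<subseteq> carrier G" "infinite S"
  shows "|generate_level G S n| \<le>o |S|"
proof (induction n)
  case 0
  show ?case
    using card_of_insert_ordLeq_infinite[OF assms(2) card_of_mono1[OF subset_refl]] by simp
next
  case (Suc n)
  have "infinite (generate_level G S n)"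
    using generate_level_mono[OF assms(1), of 0 n] assms(2) finite_subset by auto
  then have "|generate_level G S n \<times> generate_level G S n| =o |generate_level G S n|"
    by (rule card_of_Times_same_infinite)
  then have "|generate_level G S (Suc n)| \<le>o |generate_level G S n|"
    using card_of_image ordLeq_ordIso_trans by (metis generate_level.simps(2))
  then show ?case using Suc by (rule ordLeq_transitive)
qed

lemma card_of_generate:
  assumes "S \<subseteq> carrier G" "infinite S"
  shows "|generate G S| \<le>o |S|"
proof -
  have "S \<subseteq> generate_level G S 0" by auto
  then have "S \<subseteq> (\<Union>n. generate_level G S n)" by blast
  then have "generate G S \<subseteq> (\<Union>n. generate_level G S n)"
    using generate_subgroup_incl subgroup_Union_generate_level[OF assms(1)] by blast
  moreover have "|\<Union>n. generate_level G S n| \<le>o |S|"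
    using card_of_UNION_ordLeq_infinite[OF assms(2)] card_of_generate_level[OF assms]
      infinite_iff_card_of_nat assms(2) by blast
  ultimately show ?thesis using card_of_mono1 ordLeq_transitive by blast
qed

lemma carrier_ordLeq_l_cosets:
  assumes stable: "stable |carrier G|" and D: "subgroup D G" "|D| <o |carrier G|"
  shows "|carrier G| \<le>o |(\<lambda>x. x <# D) ` carrier G|"
proof (rule ccontr)
  let ?cosets = "(\<lambda>x. x <# D) ` carrier G"
  assume "\<not> ?thesis"
  then have "|?cosets| <o |carrier G|"
    using not_ordLeq_iff_ordLess[OF card_of_Well_order card_of_Well_order] by blast
  then have "|\<Union>C\<in>?cosets. C| <o |carrier G|"
  proof (rule stable_UNION[OF stable])
    fix C assume "C \<in> ?cosets"
    then obtain x where "C = x <# D" by blast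
    then show "|C| <o |carrier G|" using card_of_l_coset D(2) by (metis ordLeq_ordLess_trans)
  qed
  moreover have "carrier G \<subseteq> (\<Union>C\<in>?cosets. C)"
    using l_coset_mem_iff[OF D(1)] subgroup.one_closed[OF D(1)] by auto
  then have "|carrier G| \<le>o |\<Union>C\<in>?cosets. C|" by (rule card_of_mono1)
  ultimately have "|carrier G| <o |carrier G|" by (metis ordLeq_ordLess_trans)
  then show False using ordLess_irreflexive by blast
qed

lemma l_coset_representatives:
  assumes "|M| \<le>o |(\<lambda>x. x <# D) ` carrier G|"
  obtains R where "R \<subseteq> carrier G" "inj_on (\<lambda>x. x <# D) R" "|R| =o |M|"
proof -
  let ?coset = "\<lambda>x. x <# D"
  let ?rep = "inv_into (carrier G) ?coset"
  obtain j where j: "inj_on j M" "j ` M \<subseteq> ?coset ` carrier G"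
    using assms unfolding card_of_ordLeq[symmetric] by blast
  have rep: "?rep (j m) \<in> carrier G" "?coset (?rep (j m)) = j m" if "m \<in> M" for m
  proof -
    have "j m \<in> ?coset ` carrier G" using that j(2) by blast
    then show "?rep (j m) \<in> carrier G" "?coset (?rep (j m)) = j m"
      by (rule inv_into_into, rule f_inv_into_f)
  qed
  define R where "R = (\<lambda>m. ?rep (j m)) ` M"
  have "inj_on (\<lambda>m. ?rep (j m)) M"
  proof (rule inj_onI)
    fix m m' assume "m \<in> M" "m' \<in> M" "?rep (j m) = ?rep (j m')"
    then have "j m = j m'" using rep(2) by metis
    then show "m = m'" using inj_onD[OF j(1)] \<open>m \<in> M\<close> \<open>m' \<in> M\<close> by blast
  qed
  then have "|M| =o |R|" unfolding R_def by (rule card_of_ordIsoI[OF inj_on_imp_bij_betw])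
  moreover have "inj_on ?coset R"
    unfolding R_def by (rule inj_on_inverseI[where g = ?rep]) (use rep(2) in auto)
  moreover have "R \<subseteq> carrier G" unfolding R_def using rep(1) by blast
  ultimately show thesis using that ordIso_symmetric by blast
qed

text \<open>Given an infinite M between |D| and |G|, enlarge D by g and by representatives of |M|
  distinct cosets, and close under the group operations.\<close>

lemma small_subgroup_extension:
  assumes stable: "stable |carrier G|" and D: "subgroup D G" "|D| <o |carrier G|"
    and g: "g \<in> carrier G"
    and M: "infinite M" "|D| \<le>o |M|" "|M| <o |carrier G|"
  obtains D' where "subgroup D' G" "D \<subseteq> D'" "g \<in> D'" "|D'| <o |carrier G|"
    "|(\<lambda>x. x <# D) ` D'| =o |M|"
proof -
  have "|M| \<le>o |(\<lambda>x. x <# D) ` carrier G|"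
    using ordLess_imp_ordLeq[OF M(3)] carrier_ordLeq_l_cosets[OF stable D] by (rule ordLeq_transitive)
  then obtain R where R: "R \<subseteq> carrier G" "inj_on (\<lambda>x. x <# D) R" "|R| =o |M|"
    by (rule l_coset_representatives)
  define S where "S = insert g (D \<union> R)"
  have S_carrier: "S \<subseteq> carrier G" unfolding S_def using g subgroup.subset[OF D(1)] R(1) by blast
  have "infinite S" unfolding S_def using card_of_ordIso_finite[OF R(3)] M(1) by auto
  have "|D \<union> R| \<le>o |M|"
    by (rule card_of_Un_ordLeq_infinite_Field[of "|M|", unfolded Field_card_of,
          OF M(1) M(2) ordIso_imp_ordLeq[OF R(3)] card_of_card_order_on])
  then have "|S| \<le>o |M|" unfolding S_def by (rule card_of_insert_ordLeq_infinite[OF M(1)])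
  define D' where "D' = generate G S"
  have D'_small: "|D'| \<le>o |M|"
    unfolding D'_def using card_of_generate[OF S_carrier \<open>infinite S\<close>] \<open>|S| \<le>o |M|\<close>
    by (rule ordLeq_transitive)
  have S_D': "S \<subseteq> D'" unfolding D'_def by (auto intro: generate.incl)
  have "|M| \<le>o |(\<lambda>x. x <# D) ` D'|"
  proof -
    have "|M| =o |(\<lambda>x. x <# D) ` R|"
      using ordIso_symmetric[OF R(3)] card_of_ordIsoI[OF inj_on_imp_bij_betw[OF R(2)]]
      by (rule ordIso_transitive)
    moreover have "(\<lambda>x. x <# D) ` R \<subseteq> (\<lambda>x. x <# D) ` D'" using S_D' unfolding S_def by blast
    ultimately show ?thesis by (metis card_of_mono1 ordIso_ordLeq_trans)
  qed
  moreover have "|(\<lambda>x. x <# D) ` D'| \<le>o |M|"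
    using card_of_image D'_small by (rule ordLeq_transitive)
  ultimately have "|(\<lambda>x. x <# D) ` D'| =o |M|" by (simp add: ordIso_iff_ordLeq)
  moreover have "subgroup D' G" unfolding D'_def by (rule generate_is_subgroup[OF S_carrier])
  moreover have "D \<subseteq> D'" "g \<in> D'" using S_D' unfolding S_def by auto
  moreover have "|D'| <o |carrier G|" using D'_small M(3) by (rule ordLeq_ordLess_trans)
  ultimately show thesis using that by blast
qed

lemma l_coset_transversal:
  assumes "subgroup D G" "subgroup D' G" "D \<subseteq> D'"
  obtains r where "\<And>C. C \<in> (\<lambda>x. x <# D) ` D' \<Longrightarrow> r C \<in> D' \<and> r C <# D = C" "r D = \<one>"
proof
  let ?r = "\<lambda>C. if C = D then \<one> else inv_into D' (\<lambda>x. x <# D) C"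
  show "?r C \<in> D' \<and> ?r C <# D = C" if C: "C \<in> (\<lambda>x. x <# D) ` D'" for C
  proof (cases "C = D")
    case True
    then show ?thesis
      using subgroup.one_closed[OF assms(2)] lcos_mult_one[OF subgroup.subset[OF assms(1)]] by simp
  next
    case False
    then show ?thesis using f_inv_into_f[OF C] inv_into_into[OF C] by simp
  qed
qed simp

end

section \<open>Extending a coset-preserving bijection\<close>

definition coset_preserving ::
  "('a, 'm) monoid_scheme \<Rightarrow> ('b, 'n) monoid_scheme \<Rightarrow> 'a set \<Rightarrow> 'b set \<Rightarrow> ('a \<Rightarrow> 'b) \<Rightarrow> 'a set \<Rightarrow> bool"
  where "coset_preserving G H K L f A \<longleftrightarrow>
    (\<forall>x\<in>A. \<forall>y\<in>A. inv\<^bsub>G\<^esub> x \<otimes>\<^bsub>G\<^esub> y \<in> K \<longleftrightarrow> inv\<^bsub>H\<^esub> (f x) \<otimes>\<^bsub>H\<^esub> f y \<in> L)"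

lemma coset_preserving_inv_into:
  assumes bij: "bij_betw f A B" and preserving: "coset_preserving G H K L f A"
  shows "coset_preserving H G L K (inv_into A f) B"
  unfolding coset_preserving_def
proof (intro ballI)
  fix x y assume "x \<in> B" "y \<in> B"
  then have xy: "x \<in> f ` A" "y \<in> f ` A" using bij_betw_imp_surj_on[OF bij] by auto
  let ?a = "inv_into A f x" and ?b = "inv_into A f y"
  have "inv\<^bsub>G\<^esub> ?a \<otimes>\<^bsub>G\<^esub> ?b \<in> K \<longleftrightarrow> inv\<^bsub>H\<^esub> (f ?a) \<otimes>\<^bsub>H\<^esub> f ?b \<in> L"
    using preserving inv_into_into[OF xy(1)] inv_into_into[OF xy(2)]
    unfolding coset_preserving_def by blast
  then show "inv\<^bsub>H\<^esub> x \<otimes>\<^bsub>H\<^esub> y \<in> L \<longleftrightarrow> inv\<^bsub>G\<^esub> ?a \<otimes>\<^bsub>G\<^esub> ?b \<in> K"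
    using f_inv_into_f[OF xy(1)] f_inv_into_f[OF xy(2)] by simp
qed

lemma coset_preserving_subgroups:
  assumes K: "subgroup K G" and L: "subgroup L H" and f: "f ` K \<subseteq> L"
  shows "coset_preserving G H K L f K"
  unfolding coset_preserving_def
proof (intro ballI)
  fix x y assume x: "x \<in> K" and y: "y \<in> K"
  have "inv\<^bsub>G\<^esub> x \<otimes>\<^bsub>G\<^esub> y \<in> K"
    by (rule subgroup.m_closed[OF K subgroup.m_inv_closed[OF K x] y])
  moreover have "f x \<in> L" "f y \<in> L" using f x y by auto
  then have "inv\<^bsub>H\<^esub> (f x) \<otimes>\<^bsub>H\<^esub> f y \<in> L"
    by (rule subgroup.m_closed[OF L subgroup.m_inv_closed[OF L]])
  ultimately show "inv\<^bsub>G\<^esub> x \<otimes>\<^bsub>G\<^esub> y \<in> K \<longleftrightarrow> inv\<^bsub>H\<^esub> (f x) \<otimes>\<^bsub>H\<^esub> f y \<in> L" by blast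
qed

lemma coset_preserving_image_l_coset:
  assumes G: "group G" and H: "group H" and K: "subgroup K G" and L: "subgroup L H"
    and f: "f \<in> carrier G \<rightarrow> carrier H" and preserving: "coset_preserving G H K L f (carrier G)"
    and x: "x \<in> carrier G"
  shows "f ` (x <#\<^bsub>G\<^esub> K) \<subseteq> f x <#\<^bsub>H\<^esub> L"
proof
  fix z assume "z \<in> f ` (x <#\<^bsub>G\<^esub> K)"
  then obtain y where y: "y \<in> carrier G" "inv\<^bsub>G\<^esub> x \<otimes>\<^bsub>G\<^esub> y \<in> K" and z: "z = f y"
    using group.l_coset_mem_iff[OF G K x] by blast
  have "inv\<^bsub>H\<^esub> (f x) \<otimes>\<^bsub>H\<^esub> f y \<in> L"
    using preserving x y unfolding coset_preserving_def by blast
  moreover have "f x \<in> carrier H" "f y \<in> carrier H" using f x y(1) by (auto dest: funcset_mem)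
  ultimately show "z \<in> f x <#\<^bsub>H\<^esub> L"
    unfolding z using group.l_coset_mem_iff[OF H L] by blast
qed

text \<open>The extension sends x = r(xD) \<cdot> d with d \<in> D to s(c(xD)) \<cdot> f(d).\<close>

locale coset_matching = G: group G + H: group H
  for G :: "('a, 'm) monoid_scheme" and H :: "('b, 'n) monoid_scheme" +
  fixes D D' :: "'a set" and E E' :: "'b set" and f :: "'a \<Rightarrow> 'b"
    and c :: "'a set \<Rightarrow> 'b set" and r :: "'a set \<Rightarrow> 'a" and s :: "'b set \<Rightarrow> 'b"
  assumes D: "subgroup D G" "subgroup D' G" "D \<subseteq> D'"
    and E: "subgroup E H" "subgroup E' H" "E \<subseteq> E'"
    and bij_f: "bij_betw f D E"
    and bij_c: "bij_betw c ((\<lambda>x. x <#\<^bsub>G\<^esub> D) ` D') ((\<lambda>y. y <#\<^bsub>H\<^esub> E) ` E')"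
    and c_D: "c D = E"
    and r: "\<And>C. C \<in> (\<lambda>x. x <#\<^bsub>G\<^esub> D) ` D' \<Longrightarrow> r C \<in> D' \<and> r C <#\<^bsub>G\<^esub> D = C" "r D = \<one>\<^bsub>G\<^esub>"
    and s: "\<And>C. C \<in> (\<lambda>y. y <#\<^bsub>H\<^esub> E) ` E' \<Longrightarrow> s C \<in> E' \<and> s C <#\<^bsub>H\<^esub> E = C" "s E = \<one>\<^bsub>H\<^esub>"
begin

definition offset :: "'a \<Rightarrow> 'a" where
  "offset x = inv\<^bsub>G\<^esub> (r (x <#\<^bsub>G\<^esub> D)) \<otimes>\<^bsub>G\<^esub> x"

definition matched :: "'a \<Rightarrow> 'b" where
  "matched x = s (c (x <#\<^bsub>G\<^esub> D)) \<otimes>\<^bsub>H\<^esub> f (offset x)"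

lemma D'_carrier: "x \<in> D' \<Longrightarrow> x \<in> carrier G"
  using subgroup.mem_carrier[OF D(2)] .

lemma E'_carrier: "y \<in> E' \<Longrightarrow> y \<in> carrier H"
  using subgroup.mem_carrier[OF E(2)] .

lemma offset_mem: "x \<in> D' \<Longrightarrow> offset x \<in> D"
proof -
  assume x: "x \<in> D'"
  then have "r (x <#\<^bsub>G\<^esub> D) \<in> D'" "r (x <#\<^bsub>G\<^esub> D) <#\<^bsub>G\<^esub> D = x <#\<^bsub>G\<^esub> D"
    using r(1) by auto
  then show ?thesis
    unfolding offset_def using G.l_coset_eq_iff[OF D(1)] D'_carrier x by blast
qed

lemma f_offset_mem: "x \<in> D' \<Longrightarrow> f (offset x) \<in> E"
  using offset_mem bij_betwE[OF bij_f] by blast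

lemma f_offset_carrier: "x \<in> D' \<Longrightarrow> f (offset x) \<in> carrier H"
  using f_offset_mem subgroup.mem_carrier[OF E(1)] by blast

lemma representative_of_matched_coset:
  assumes "x \<in> D'"
  shows "s (c (x <#\<^bsub>G\<^esub> D)) \<in> E'" "s (c (x <#\<^bsub>G\<^esub> D)) <#\<^bsub>H\<^esub> E = c (x <#\<^bsub>G\<^esub> D)"
proof -
  have "c (x <#\<^bsub>G\<^esub> D) \<in> (\<lambda>y. y <#\<^bsub>H\<^esub> E) ` E'" using bij_betwE[OF bij_c] assms by blast
  then show "s (c (x <#\<^bsub>G\<^esub> D)) \<in> E'" "s (c (x <#\<^bsub>G\<^esub> D)) <#\<^bsub>H\<^esub> E = c (x <#\<^bsub>G\<^esub> D)"
    using s(1) by blast+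
qed

lemma matched_mem: "x \<in> D' \<Longrightarrow> matched x \<in> E'"
  unfolding matched_def
  using representative_of_matched_coset(1) f_offset_mem E(3) subgroup.m_closed[OF E(2)] by blast

lemma l_coset_matched: "x \<in> D' \<Longrightarrow> matched x <#\<^bsub>H\<^esub> E = c (x <#\<^bsub>G\<^esub> D)"
proof -
  assume x: "x \<in> D'"
  note C = representative_of_matched_coset[OF x]
  have "matched x \<in> s (c (x <#\<^bsub>G\<^esub> D)) <#\<^bsub>H\<^esub> E"
    unfolding matched_def
    using C(1) E'_carrier H.l_coset_mem_iff[OF E(1)] f_offset_carrier[OF x] f_offset_mem[OF x]
    by (simp add: H.m_assoc[symmetric])
  then show ?thesis
    using H.l_repr_independence[OF _ E'_carrier[OF C(1)] E(1)] C(2) by simp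
qed

lemma l_coset_eq_if_matched_l_coset_eq:
  assumes x: "x \<in> D'" and y: "y \<in> D'" and eq: "matched x <#\<^bsub>H\<^esub> E = matched y <#\<^bsub>H\<^esub> E"
  shows "x <#\<^bsub>G\<^esub> D = y <#\<^bsub>G\<^esub> D"
proof -
  have "c (x <#\<^bsub>G\<^esub> D) = c (y <#\<^bsub>G\<^esub> D)" using eq l_coset_matched[OF x] l_coset_matched[OF y] by simp
  moreover have "x <#\<^bsub>G\<^esub> D \<in> (\<lambda>x. x <#\<^bsub>G\<^esub> D) ` D'" "y <#\<^bsub>G\<^esub> D \<in> (\<lambda>x. x <#\<^bsub>G\<^esub> D) ` D'"
    using x y by blast+
  ultimately show ?thesis by (rule inj_onD[OF bij_betw_imp_inj_on[OF bij_c]])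
qed

text \<open>Inside one coset of D both the quotient in G and the quotient of the images reduce to the
  offsets, on which the extension is f.\<close>

lemma quotients_in_same_l_coset:
  assumes x: "x \<in> D'" and y: "y \<in> D'" and eq: "x <#\<^bsub>G\<^esub> D = y <#\<^bsub>G\<^esub> D"
  shows "inv\<^bsub>G\<^esub> x \<otimes>\<^bsub>G\<^esub> y = inv\<^bsub>G\<^esub> (offset x) \<otimes>\<^bsub>G\<^esub> offset y"
    and "inv\<^bsub>H\<^esub> (matched x) \<otimes>\<^bsub>H\<^esub> matched y = inv\<^bsub>H\<^esub> (f (offset x)) \<otimes>\<^bsub>H\<^esub> f (offset y)"
proof -
  have rx: "r (x <#\<^bsub>G\<^esub> D) \<in> carrier G" using r(1) x D'_carrier by blast
  have sx: "s (c (x <#\<^bsub>G\<^esub> D)) \<in> carrier H"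
    using representative_of_matched_coset(1)[OF x] E'_carrier by blast
  show "inv\<^bsub>G\<^esub> x \<otimes>\<^bsub>G\<^esub> y = inv\<^bsub>G\<^esub> (offset x) \<otimes>\<^bsub>G\<^esub> offset y"
    unfolding offset_def eq[symmetric] using rx x y D'_carrier
    by (simp add: G.inv_mult_group G.m_assoc[symmetric]) (simp add: G.m_assoc)
  show "inv\<^bsub>H\<^esub> (matched x) \<otimes>\<^bsub>H\<^esub> matched y = inv\<^bsub>H\<^esub> (f (offset x)) \<otimes>\<^bsub>H\<^esub> f (offset y)"
    unfolding matched_def eq[symmetric] using sx f_offset_carrier[OF x] f_offset_carrier[OF y]
    by (simp add: H.inv_mult_group H.m_assoc[symmetric]) (simp add: H.m_assoc)
qed

lemma matched_eq: "x \<in> D \<Longrightarrow> matched x = f x"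
proof -
  assume x: "x \<in> D"
  then have "x <#\<^bsub>G\<^esub> D = D" using G.coset_join3[OF _ D(1)] subgroup.mem_carrier[OF D(1)] by blast
  moreover have "f x \<in> carrier H" using x bij_betwE[OF bij_f] subgroup.mem_carrier[OF E(1)] by blast
  ultimately show ?thesis
    unfolding matched_def offset_def using r(2) s(2) c_D subgroup.mem_carrier[OF D(1)] x by simp
qed

lemma coset_preserving_matched:
  assumes KL: "K \<subseteq> D" "L \<subseteq> E" and f: "coset_preserving G H K L f D"
  shows "coset_preserving G H K L matched D'"
  unfolding coset_preserving_def
proof (intro ballI)
  fix x y assume x: "x \<in> D'" and y: "y \<in> D'"
  show "inv\<^bsub>G\<^esub> x \<otimes>\<^bsub>G\<^esub> y \<in> K \<longleftrightarrow> inv\<^bsub>H\<^esub> (matched x) \<otimes>\<^bsub>H\<^esub> matched y \<in> L"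
  proof (cases "x <#\<^bsub>G\<^esub> D = y <#\<^bsub>G\<^esub> D")
    case True
    then show ?thesis
      using quotients_in_same_l_coset[OF x y] f offset_mem[OF x] offset_mem[OF y]
      unfolding coset_preserving_def by simp
  next
    case False
    then have "inv\<^bsub>G\<^esub> x \<otimes>\<^bsub>G\<^esub> y \<notin> D"
      using G.l_coset_eq_iff[OF D(1)] x y D'_carrier by blast
    moreover have "inv\<^bsub>H\<^esub> (matched x) \<otimes>\<^bsub>H\<^esub> matched y \<notin> E"
      using False l_coset_eq_if_matched_l_coset_eq[OF x y] H.l_coset_eq_iff[OF E(1)]
        matched_mem x y E'_carrier by blast
    ultimately show ?thesis using KL by blast
  qed
qed

lemma matched_representative_mult:
  assumes C: "C \<in> (\<lambda>x. x <#\<^bsub>G\<^esub> D) ` D'" and d: "d \<in> D"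
  shows "r C \<otimes>\<^bsub>G\<^esub> d \<in> D'" and "matched (r C \<otimes>\<^bsub>G\<^esub> d) = s (c C) \<otimes>\<^bsub>H\<^esub> f d"
proof -
  have rC: "r C \<in> D'" "r C <#\<^bsub>G\<^esub> D = C" using r(1)[OF C] by auto
  show mem: "r C \<otimes>\<^bsub>G\<^esub> d \<in> D'"
    by (rule subgroup.m_closed[OF D(2) rC(1)]) (use d D(3) in blast)
  have dc: "d \<in> carrier G" using d subgroup.mem_carrier[OF D(1)] by blast
  have quotient: "inv\<^bsub>G\<^esub> (r C) \<otimes>\<^bsub>G\<^esub> (r C \<otimes>\<^bsub>G\<^esub> d) = d"
    using D'_carrier[OF rC(1)] dc by (simp add: G.m_assoc[symmetric])
  have "r C <#\<^bsub>G\<^esub> D = (r C \<otimes>\<^bsub>G\<^esub> d) <#\<^bsub>G\<^esub> D"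
    using G.l_coset_eq_iff[OF D(1) D'_carrier[OF rC(1)] D'_carrier[OF mem]] quotient d by simp
  then have "(r C \<otimes>\<^bsub>G\<^esub> d) <#\<^bsub>G\<^esub> D = C" using rC(2) by simp
  then show "matched (r C \<otimes>\<^bsub>G\<^esub> d) = s (c C) \<otimes>\<^bsub>H\<^esub> f d"
    unfolding matched_def offset_def using quotient by simp
qed

lemma inj_on_matched: "inj_on matched D'"
proof (rule inj_onI)
  fix x y assume x: "x \<in> D'" and y: "y \<in> D'" and eq: "matched x = matched y"
  then have same: "x <#\<^bsub>G\<^esub> D = y <#\<^bsub>G\<^esub> D"
    using l_coset_eq_if_matched_l_coset_eq[OF x y] by simp
  have "inv\<^bsub>H\<^esub> (f (offset x)) \<otimes>\<^bsub>H\<^esub> f (offset y) = \<one>\<^bsub>H\<^esub>"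
    using quotients_in_same_l_coset(2)[OF x y same] eq matched_mem[OF y] E'_carrier by simp
  then have "f (offset x) = f (offset y)"
    using H.inv_solve_left'[OF H.one_closed f_offset_carrier[OF x] f_offset_carrier[OF y]]
      f_offset_carrier[OF x] by simp
  then have "offset x = offset y"
    using inj_onD[OF bij_betw_imp_inj_on[OF bij_f]] offset_mem[OF x] offset_mem[OF y] by blast
  then have "inv\<^bsub>G\<^esub> x \<otimes>\<^bsub>G\<^esub> y = \<one>\<^bsub>G\<^esub>"
    using quotients_in_same_l_coset(1)[OF x y same] offset_mem[OF y] subgroup.mem_carrier[OF D(1)]
    by simp
  then show "x = y"
    using G.inv_solve_left'[OF G.one_closed D'_carrier[OF x] D'_carrier[OF y]] D'_carrier[OF x] by simp
qed

lemma E'_subset_image_matched: "E' \<subseteq> matched ` D'"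
proof
  fix y assume y: "y \<in> E'"
  let ?B = "y <#\<^bsub>H\<^esub> E"
  have "?B \<in> c ` (\<lambda>x. x <#\<^bsub>G\<^esub> D) ` D'"
    using y bij_betw_imp_surj_on[OF bij_c] by blast
  then obtain C where C: "C \<in> (\<lambda>x. x <#\<^bsub>G\<^esub> D) ` D'" "c C = ?B" by (rule imageE) simp
  have "?B \<in> (\<lambda>y. y <#\<^bsub>H\<^esub> E) ` E'" using y by blast
  then have B: "s ?B \<in> E'" "s ?B <#\<^bsub>H\<^esub> E = ?B" using s(1) by blast+
  then have "inv\<^bsub>H\<^esub> (s ?B) \<otimes>\<^bsub>H\<^esub> y \<in> E"
    using H.l_coset_eq_iff[OF E(1) E'_carrier[OF B(1)] E'_carrier[OF y]] by simp
  then have "inv\<^bsub>H\<^esub> (s ?B) \<otimes>\<^bsub>H\<^esub> y \<in> f ` D" using bij_betw_imp_surj_on[OF bij_f] by simp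
  then obtain d where d: "d \<in> D" "f d = inv\<^bsub>H\<^esub> (s ?B) \<otimes>\<^bsub>H\<^esub> y" by (rule imageE) simp
  have "matched (r C \<otimes>\<^bsub>G\<^esub> d) = y"
    using matched_representative_mult(2)[OF C(1) d(1)] C(2) d(2) B(1) y E'_carrier
    by (simp add: H.m_assoc[symmetric])
  then show "y \<in> matched ` D'"
    using matched_representative_mult(1)[OF C(1) d(1)] by blast
qed

lemma bij_betw_matched: "bij_betw matched D' E'"
  using inj_on_matched matched_mem E'_subset_image_matched by (auto intro: bij_betw_imageI)

end

lemma coset_preserving_extension:
  assumes G: "group G" and H: "group H"
    and D: "subgroup D G" "subgroup D' G" "D \<subseteq> D'"
    and E: "subgroup E H" "subgroup E' H" "E \<subseteq> E'"
    and f: "bij_betw f D E"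
    and c: "bij_betw c ((\<lambda>x. x <#\<^bsub>G\<^esub> D) ` D') ((\<lambda>y. y <#\<^bsub>H\<^esub> E) ` E')" "c D = E"
  obtains f' where "bij_betw f' D' E'" "\<And>x. x \<in> D \<Longrightarrow> f' x = f x"
    "\<And>K L. K \<subseteq> D \<Longrightarrow> L \<subseteq> E \<Longrightarrow> coset_preserving G H K L f D \<Longrightarrow>
       coset_preserving G H K L f' D'"
proof -
  obtain r where r: "\<And>C. C \<in> (\<lambda>x. x <#\<^bsub>G\<^esub> D) ` D' \<Longrightarrow> r C \<in> D' \<and> r C <#\<^bsub>G\<^esub> D = C"
    "r D = \<one>\<^bsub>G\<^esub>"
    using group.l_coset_transversal[OF G D] by metis
  obtain s where s: "\<And>C. C \<in> (\<lambda>y. y <#\<^bsub>H\<^esub> E) ` E' \<Longrightarrow> s C \<in> E' \<and> s C <#\<^bsub>H\<^esub> E = C"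
    "s E = \<one>\<^bsub>H\<^esub>"
    using group.l_coset_transversal[OF H E] by metis
  interpret coset_matching G H D D' E E' f c r s
    by (rule coset_matching.intro[OF G H coset_matching_axioms.intro]) (fact D E f c r s)+
  show thesis by (rule that[OF bij_betw_matched matched_eq coset_preserving_matched])
qed

section \<open>Balls of group balleans\<close>

lemma subgroup_in_group_ballean_F:
  "subgroup K G \<Longrightarrow> |K| <o |carrier G| \<Longrightarrow> K \<in> group_ballean_F G"
  unfolding group_ballean_F_def by (simp add: subgroup.subset subgroup.one_closed)

lemma prec_mapping_group_balleanI:
  assumes G: "group G" and H: "group H" and stable: "stable |carrier G|"
    and f: "f \<in> carrier G \<rightarrow> carrier H"
    and chain: "chain\<^sub>\<subseteq> Ks" and cover: "\<Union>Ks = carrier G"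
    and pieces: "\<And>K. K \<in> Ks \<Longrightarrow> \<exists>L. subgroup K G \<and> |K| <o |carrier G| \<and>
       subgroup L H \<and> |L| <o |carrier H| \<and> coset_preserving G H K L f (carrier G)"
  shows "prec_mapping (carrier G) (group_ballean_F G) (group_ballean_B G)
    (carrier H) (group_ballean_F H) (group_ballean_B H) f"
  unfolding prec_mapping_def
proof
  fix A assume "A \<in> group_ballean_F G"
  then have A: "A \<subseteq> carrier G" "|A| <o |carrier G|" unfolding group_ballean_F_def by auto
  have small: "|K| <o |carrier G|" if "K \<in> Ks" for K using pieces[OF that] by blast
  obtain K where K: "K \<in> Ks" "A \<subseteq> K"
    using chain_member_containing_small_set[OF stable small chain cover A] by blast
  obtain L where K_sub: "subgroup K G" and L: "subgroup L H" "|L| <o |carrier H|"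
    and preserving: "coset_preserving G H K L f (carrier G)"
    using pieces[OF K(1)] by blast
  show "\<exists>\<beta>\<in>group_ballean_F H. \<forall>x\<in>carrier G.
      f ` group_ballean_B G x A \<subseteq> group_ballean_B H (f x) \<beta>"
  proof (intro bexI[OF _ subgroup_in_group_ballean_F[OF L]] ballI)
    fix x assume x: "x \<in> carrier G"
    have "x <#\<^bsub>G\<^esub> A \<subseteq> x <#\<^bsub>G\<^esub> K" using K(2) unfolding l_coset_def by blast
    then have "f ` (x <#\<^bsub>G\<^esub> A) \<subseteq> f ` (x <#\<^bsub>G\<^esub> K)" by (rule image_mono)
    also have "\<dots> \<subseteq> f x <#\<^bsub>H\<^esub> L"
      by (rule coset_preserving_image_l_coset[OF G H K_sub L(1) f preserving x])
    finally show "f ` group_ballean_B G x A \<subseteq> group_ballean_B H (f x) L"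
      unfolding group_ballean_B_def .
  qed
qed

section \<open>Chains of coset-preserving pieces\<close>

locale regular_groups = G: group G + H: group H
  for G :: "('a, 'm) monoid_scheme" and H :: "('b, 'n) monoid_scheme" +
  assumes card_eq: "|carrier G| =o |carrier H|"
    and stable_G: "stable |carrier G|"
    and uncountable_G: "|UNIV :: nat set| <o |carrier G|"
begin

lemma stable_H: "stable |carrier H|"
  using stable_ordIso1[OF stable_G ordIso_symmetric[OF card_eq]] .

lemma uncountable_H: "|UNIV :: nat set| <o |carrier H|"
  using uncountable_G card_eq by (rule ordLess_ordIso_trans)

lemma infinite_G: "infinite (carrier G)"
  unfolding infinite_iff_card_of_nat using uncountable_G by (rule ordLess_imp_ordLeq)

lemma infinite_H: "infinite (carrier H)"
  unfolding infinite_iff_card_of_nat using uncountable_H by (rule ordLess_imp_ordLeq)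

lemma bij_betw_small_iff:
  assumes "bij_betw f A B"
  shows "|A| <o |carrier G| \<longleftrightarrow> |B| <o |carrier H|"
proof -
  have AB: "|A| =o |B|" using assms by (rule card_of_ordIsoI)
  show ?thesis
  proof
    assume "|A| <o |carrier G|"
    then have "|B| <o |carrier G|" by (rule ordIso_ordLess_trans[OF ordIso_symmetric[OF AB]])
    then show "|B| <o |carrier H|" using card_eq by (rule ordLess_ordIso_trans)
  next
    assume "|B| <o |carrier H|"
    then have "|A| <o |carrier H|" by (rule ordIso_ordLess_trans[OF AB])
    then show "|A| <o |carrier G|" using ordIso_symmetric[OF card_eq] by (rule ordLess_ordIso_trans)
  qed
qed

definition piece :: "'a set \<Rightarrow> 'b set \<Rightarrow> ('a \<Rightarrow> 'b) \<Rightarrow> bool" where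
  "piece K L \<phi> \<longleftrightarrow> subgroup K G \<and> subgroup L H \<and> |K| <o |carrier G| \<and> bij_betw \<phi> K L"

text \<open>The last clause makes every proper extension swallow the least missing elements; this is
  what forces a maximal chain to exhaust both groups.\<close>

definition extends_piece ::
  "'a set \<Rightarrow> 'b set \<Rightarrow> ('a \<Rightarrow> 'b) \<Rightarrow> 'a set \<Rightarrow> 'b set \<Rightarrow> ('a \<Rightarrow> 'b) \<Rightarrow> bool" where
  "extends_piece K L \<phi> K' L' \<phi>' \<longleftrightarrow> L \<subseteq> L' \<and> (\<forall>x\<in>K. \<phi>' x = \<phi> x) \<and>
     coset_preserving G H K L \<phi>' K' \<and>
     (K \<noteq> K' \<longrightarrow> least_outside (carrier G) K \<in> K' \<and> least_outside (carrier H) L \<in> L')"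

definition trivial_piece :: "'a set \<times> 'b set \<times> ('a \<Rightarrow> 'b)" where
  "trivial_piece = ({\<one>\<^bsub>G\<^esub>}, {\<one>\<^bsub>H\<^esub>}, \<lambda>_. \<one>\<^bsub>H\<^esub>)"

definition coherent :: "('a set \<times> 'b set \<times> ('a \<Rightarrow> 'b)) set \<Rightarrow> bool" where
  "coherent S \<longleftrightarrow> trivial_piece \<in> S \<and> (\<forall>K L \<phi>. (K, L, \<phi>) \<in> S \<longrightarrow> piece K L \<phi>) \<and>
     (\<forall>K L \<phi> K' L' \<phi>'. (K, L, \<phi>) \<in> S \<longrightarrow> (K', L', \<phi>') \<in> S \<longrightarrow>
        (K \<subseteq> K' \<or> K' \<subseteq> K) \<and> (K \<subseteq> K' \<longrightarrow> extends_piece K L \<phi> K' L' \<phi>'))"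

definition domain_chain :: "('a set \<times> 'b set \<times> ('a \<Rightarrow> 'b)) set \<Rightarrow> 'a set set" where
  "domain_chain S = {K. \<exists>L \<phi>. (K, L, \<phi>) \<in> S}"

definition range_chain :: "('a set \<times> 'b set \<times> ('a \<Rightarrow> 'b)) set \<Rightarrow> 'b set set" where
  "range_chain S = {L. \<exists>K \<phi>. (K, L, \<phi>) \<in> S}"

definition glued_map :: "('a set \<times> 'b set \<times> ('a \<Rightarrow> 'b)) set \<Rightarrow> 'a \<Rightarrow> 'b" where
  "glued_map S x = (SOME y. \<exists>K L \<phi>. (K, L, \<phi>) \<in> S \<and> x \<in> K \<and> y = \<phi> x)"

lemma coherent_trivial: "coherent {trivial_piece}"
proof -
  have "|{\<one>\<^bsub>G\<^esub>}| <o |carrier G|" by (rule finite_card_of_ordLess_infinite[OF _ infinite_G]) simp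
  then have "piece {\<one>\<^bsub>G\<^esub>} {\<one>\<^bsub>H\<^esub>} (\<lambda>_. \<one>\<^bsub>H\<^esub>)"
    unfolding piece_def using G.triv_subgroup H.triv_subgroup by (simp add: bij_betw_def)
  then show ?thesis
    unfolding coherent_def trivial_piece_def extends_piece_def coset_preserving_def by simp
qed

context
  fixes S assumes S: "coherent S"
begin

lemma coherent_piece: "(K, L, \<phi>) \<in> S \<Longrightarrow> piece K L \<phi>"
  using S unfolding coherent_def by blast

lemma coherent_chain: "(K, L, \<phi>) \<in> S \<Longrightarrow> (K', L', \<phi>') \<in> S \<Longrightarrow> K \<subseteq> K' \<or> K' \<subseteq> K"
  using S unfolding coherent_def by blast

lemma coherent_extends:
  "(K, L, \<phi>) \<in> S \<Longrightarrow> (K', L', \<phi>') \<in> S \<Longrightarrow> K \<subseteq> K' \<Longrightarrow> extends_piece K L \<phi> K' L' \<phi>'"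
  using S unfolding coherent_def by blast

lemma coherent_range_mono:
  "(K, L, \<phi>) \<in> S \<Longrightarrow> (K', L', \<phi>') \<in> S \<Longrightarrow> K \<subseteq> K' \<Longrightarrow> L \<subseteq> L'"
  using coherent_extends unfolding extends_piece_def by blast

lemma chain_domain_chain: "chain\<^sub>\<subseteq> (domain_chain S)"
  unfolding chain_subset_def
proof (intro ballI)
  fix K K' assume "K \<in> domain_chain S" "K' \<in> domain_chain S"
  then obtain L \<phi> L' \<phi>' where "(K, L, \<phi>) \<in> S" "(K', L', \<phi>') \<in> S"
    unfolding domain_chain_def by blast
  then show "K \<subseteq> K' \<or> K' \<subseteq> K" by (rule coherent_chain)
qed

lemma chain_range_chain: "chain\<^sub>\<subseteq> (range_chain S)"
  unfolding chain_subset_def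
proof (intro ballI)
  fix L L' assume "L \<in> range_chain S" "L' \<in> range_chain S"
  then obtain K \<phi> K' \<phi>' where t: "(K, L, \<phi>) \<in> S" "(K', L', \<phi>') \<in> S"
    unfolding range_chain_def by blast
  show "L \<subseteq> L' \<or> L' \<subseteq> L"
    using coherent_chain[OF t] coherent_range_mono[OF t] coherent_range_mono[OF t(2,1)] by blast
qed

lemma coherent_upper_bound:
  assumes t\<^sub>1: "(K\<^sub>1, L\<^sub>1, \<phi>\<^sub>1) \<in> S" and t\<^sub>2: "(K\<^sub>2, L\<^sub>2, \<phi>\<^sub>2) \<in> S"
  obtains K L \<phi> where "(K, L, \<phi>) \<in> S" "K\<^sub>1 \<subseteq> K" "K\<^sub>2 \<subseteq> K"
proof (cases "K\<^sub>1 \<subseteq> K\<^sub>2")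
  case True
  then show thesis using that[OF t\<^sub>2] by blast
next
  case False
  then have "K\<^sub>2 \<subseteq> K\<^sub>1" using coherent_chain[OF t\<^sub>1 t\<^sub>2] by blast
  then show thesis using that[OF t\<^sub>1] by blast
qed

lemma piece_containing:
  assumes "(K\<^sub>0, L\<^sub>0, \<phi>\<^sub>0) \<in> S" "x \<in> \<Union>(domain_chain S)" "y \<in> \<Union>(domain_chain S)"
  obtains K L \<phi> where "(K, L, \<phi>) \<in> S" "K\<^sub>0 \<subseteq> K" "x \<in> K" "y \<in> K"
proof -
  obtain Kx Lx \<phi>x Ky Ly \<phi>y where x: "(Kx, Lx, \<phi>x) \<in> S" "x \<in> Kx"
    and y: "(Ky, Ly, \<phi>y) \<in> S" "y \<in> Ky"
    using assms(2,3) unfolding domain_chain_def by blast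
  obtain K\<^sub>1 L\<^sub>1 \<phi>\<^sub>1 where t\<^sub>1: "(K\<^sub>1, L\<^sub>1, \<phi>\<^sub>1) \<in> S" "Kx \<subseteq> K\<^sub>1" "Ky \<subseteq> K\<^sub>1"
    using coherent_upper_bound[OF x(1) y(1)] .
  obtain K L \<phi> where "(K, L, \<phi>) \<in> S" "K\<^sub>0 \<subseteq> K" "K\<^sub>1 \<subseteq> K"
    using coherent_upper_bound[OF assms(1) t\<^sub>1(1)] .
  then show thesis using that x(2) y(2) t\<^sub>1(2,3) by blast
qed

lemma glued_map_eq:
  assumes t: "(K, L, \<phi>) \<in> S" and x: "x \<in> K"
  shows "glued_map S x = \<phi> x"
proof -
  let ?P = "\<lambda>y. \<exists>K L \<phi>. (K, L, \<phi>) \<in> S \<and> x \<in> K \<and> y = \<phi> x"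
  have "?P (\<phi> x)" using t x by blast
  then have "?P (glued_map S x)" unfolding glued_map_def by (rule someI)
  then obtain K' L' \<phi>' where t': "(K', L', \<phi>') \<in> S" "x \<in> K'" "glued_map S x = \<phi>' x" by blast
  show ?thesis
  proof (cases "K \<subseteq> K'")
    case True
    then show ?thesis using coherent_extends[OF t t'(1)] x t'(3) unfolding extends_piece_def by simp
  next
    case False
    then have "K' \<subseteq> K" using coherent_chain[OF t t'(1)] by blast
    then show ?thesis using coherent_extends[OF t'(1) t] t'(2,3) unfolding extends_piece_def by simp
  qed
qed

lemma coset_preserving_glued_map:
  assumes t: "(K, L, \<phi>) \<in> S"
  shows "coset_preserving G H K L (glued_map S) (\<Union>(domain_chain S))"
  unfolding coset_preserving_def
proof (intro ballI)
  fix x y assume "x \<in> \<Union>(domain_chain S)" "y \<in> \<Union>(domain_chain S)"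
  then obtain K' L' \<phi>' where t': "(K', L', \<phi>') \<in> S" "K \<subseteq> K'" "x \<in> K'" "y \<in> K'"
    using piece_containing[OF t] by blast
  then have "coset_preserving G H K L \<phi>' K'"
    using coherent_extends[OF t t'(1,2)] unfolding extends_piece_def by blast
  then show "inv\<^bsub>G\<^esub> x \<otimes>\<^bsub>G\<^esub> y \<in> K \<longleftrightarrow>
      inv\<^bsub>H\<^esub> (glued_map S x) \<otimes>\<^bsub>H\<^esub> glued_map S y \<in> L"
    unfolding coset_preserving_def using glued_map_eq[OF t'(1)] t'(3,4) by simp
qed

lemma trivial_piece_mem: "trivial_piece \<in> S"
  using S unfolding coherent_def by blast

lemma subgroup_Union_domain_chain: "subgroup (\<Union>(domain_chain S)) G"
proof (rule G.subgroup_Union_chain[OF _ chain_domain_chain])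
  show "domain_chain S \<noteq> {}"
    using trivial_piece_mem unfolding domain_chain_def trivial_piece_def by blast
  show "subgroup K G" if "K \<in> domain_chain S" for K
    using that coherent_piece unfolding domain_chain_def piece_def by blast
qed

lemma subgroup_Union_range_chain: "subgroup (\<Union>(range_chain S)) H"
proof (rule H.subgroup_Union_chain[OF _ chain_range_chain])
  show "range_chain S \<noteq> {}"
    using trivial_piece_mem unfolding range_chain_def trivial_piece_def by blast
  show "subgroup L H" if "L \<in> range_chain S" for L
    using that coherent_piece unfolding range_chain_def piece_def by blast
qed

lemma image_glued_map:
  assumes t: "(K, L, \<phi>) \<in> S"
  shows "glued_map S ` K = L"
proof -
  have "glued_map S ` K = \<phi> ` K" using glued_map_eq[OF t] by (rule image_cong[OF refl])
  also have "\<dots> = L" using coherent_piece[OF t] unfolding piece_def bij_betw_def by blast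
  finally show ?thesis .
qed

lemma bij_betw_glued_map: "bij_betw (glued_map S) (\<Union>(domain_chain S)) (\<Union>(range_chain S))"
proof (rule bij_betw_imageI)
  show "inj_on (glued_map S) (\<Union>(domain_chain S))"
  proof (rule inj_onI)
    fix x y assume xy: "x \<in> \<Union>(domain_chain S)" "y \<in> \<Union>(domain_chain S)"
      and eq: "glued_map S x = glued_map S y"
    obtain K L \<phi> where t: "(K, L, \<phi>) \<in> S" "{\<one>\<^bsub>G\<^esub>} \<subseteq> K" "x \<in> K" "y \<in> K"
      by (rule piece_containing[OF trivial_piece_mem[unfolded trivial_piece_def] xy])
    have eq': "\<phi> x = \<phi> y" using eq glued_map_eq[OF t(1,3)] glued_map_eq[OF t(1,4)] by simp
    have "inj_on \<phi> K" using coherent_piece[OF t(1)] unfolding piece_def bij_betw_def by blast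
    then show "x = y" using eq' t(3,4) by (rule inj_onD)
  qed
  show "glued_map S ` \<Union>(domain_chain S) = \<Union>(range_chain S)"
  proof
    show "glued_map S ` \<Union>(domain_chain S) \<subseteq> \<Union>(range_chain S)"
    proof
      fix z assume "z \<in> glued_map S ` \<Union>(domain_chain S)"
      then obtain x where x: "x \<in> \<Union>(domain_chain S)" "z = glued_map S x" by blast
      from x(1) obtain K L \<phi> where t: "(K, L, \<phi>) \<in> S" "x \<in> K"
        unfolding domain_chain_def by blast
      have "z \<in> glued_map S ` K" using t(2) x(2) by blast
      then have "z \<in> L" using image_glued_map[OF t(1)] by simp
      then show "z \<in> \<Union>(range_chain S)" using t(1) unfolding range_chain_def by blast
    qed
    show "\<Union>(range_chain S) \<subseteq> glued_map S ` \<Union>(domain_chain S)"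
    proof
      fix z assume "z \<in> \<Union>(range_chain S)"
      then obtain K L \<phi> where t: "(K, L, \<phi>) \<in> S" "z \<in> L" unfolding range_chain_def by blast
      then have "z \<in> glued_map S ` K" using image_glued_map[OF t(1)] by simp
      moreover have "K \<subseteq> \<Union>(domain_chain S)" using t(1) unfolding domain_chain_def by blast
      ultimately show "z \<in> glued_map S ` \<Union>(domain_chain S)" by blast
    qed
  qed
qed

lemma piece_range_small: "(K, L, \<phi>) \<in> S \<Longrightarrow> |L| <o |carrier H|"
proof -
  assume "(K, L, \<phi>) \<in> S"
  then have "bij_betw \<phi> K L" "|K| <o |carrier G|" using coherent_piece unfolding piece_def by blast+
  then show ?thesis using bij_betw_small_iff by blast
qed

lemma least_outside_domain_mem:
  assumes "K \<in> domain_chain S" "K' \<in> domain_chain S" "K \<subset> K'"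
  shows "least_outside (carrier G) K \<in> K'"
proof -
  obtain L \<phi> L' \<phi>' where t: "(K, L, \<phi>) \<in> S" "(K', L', \<phi>') \<in> S"
    using assms(1,2) unfolding domain_chain_def by blast
  show ?thesis using coherent_extends[OF t] assms(3) unfolding extends_piece_def by blast
qed

lemma least_outside_range_mem:
  assumes "L \<in> range_chain S" "L' \<in> range_chain S" "L \<subset> L'"
  shows "least_outside (carrier H) L \<in> L'"
proof -
  obtain K \<phi> K' \<phi>' where t: "(K, L, \<phi>) \<in> S" "(K', L', \<phi>') \<in> S"
    using assms(1,2) unfolding range_chain_def by blast
  have "K \<subseteq> K'" "K \<noteq> K'"
    using coherent_chain[OF t] coherent_range_mono[OF t(2,1)] assms(3) by blast+
  then show ?thesis using coherent_extends[OF t] unfolding extends_piece_def by blast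
qed

lemma card_of_Union_domain_chain_ordLess:
  assumes "\<Union>(domain_chain S) \<noteq> carrier G"
  shows "|\<Union>(domain_chain S)| <o |carrier G|"
proof (rule card_of_Union_chain_ordLess[OF stable_G infinite_G _ chain_domain_chain _ assms])
  fix K assume "K \<in> domain_chain S"
  then obtain L \<phi> where "piece K L \<phi>" using coherent_piece unfolding domain_chain_def by blast
  then show "K \<subseteq> carrier G \<and> |K| <o |carrier G|" using subgroup.subset unfolding piece_def by blast
next
  show "least_outside (carrier G) K \<in> K'"
    if "K \<in> domain_chain S" "K' \<in> domain_chain S" "K \<subset> K'" for K K'
    using least_outside_domain_mem[OF that] .
qed

lemma card_of_Union_range_chain_ordLess:
  assumes "\<Union>(range_chain S) \<noteq> carrier H"
  shows "|\<Union>(range_chain S)| <o |carrier H|"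
proof (rule card_of_Union_chain_ordLess[OF stable_H infinite_H _ chain_range_chain _ assms])
  fix L assume "L \<in> range_chain S"
  then obtain K \<phi> where t: "(K, L, \<phi>) \<in> S" unfolding range_chain_def by blast
  then show "L \<subseteq> carrier H \<and> |L| <o |carrier H|"
    using coherent_piece[OF t] piece_range_small[OF t] subgroup.subset unfolding piece_def by blast
next
  show "least_outside (carrier H) L \<in> L'"
    if "L \<in> range_chain S" "L' \<in> range_chain S" "L \<subset> L'" for L L'
    using least_outside_range_mem[OF that] .
qed

lemma range_eq_if_domain_eq:
  assumes t: "(K, L, \<phi>) \<in> S" and K: "K = \<Union>(domain_chain S)"
  shows "L = \<Union>(range_chain S)"
proof -
  have "L = glued_map S ` K" using image_glued_map[OF t] by simp
  also have "\<dots> = \<Union>(range_chain S)" using K bij_betw_glued_map unfolding bij_betw_def by simp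
  finally show ?thesis .
qed

lemma least_outside_proper_piece:
  assumes t: "(K, L, \<phi>) \<in> S" and proper: "K \<noteq> \<Union>(domain_chain S)"
  shows "least_outside (carrier G) K \<in> \<Union>(domain_chain S)"
    and "least_outside (carrier H) L \<in> \<Union>(range_chain S)"
proof -
  have "K \<subseteq> \<Union>(domain_chain S)" using t unfolding domain_chain_def by blast
  then obtain x where x: "x \<in> \<Union>(domain_chain S)" "x \<notin> K" using proper by blast
  then obtain K' L' \<phi>' where t': "(K', L', \<phi>') \<in> S" "x \<in> K'" unfolding domain_chain_def by blast
  have "K \<subseteq> K'" using coherent_chain[OF t t'(1)] x(2) t'(2) by blast
  moreover have "K \<noteq> K'" using x(2) t'(2) by blast
  ultimately have "least_outside (carrier G) K \<in> K'" "least_outside (carrier H) L \<in> L'"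
    using coherent_extends[OF t t'(1)] unfolding extends_piece_def by blast+
  then show "least_outside (carrier G) K \<in> \<Union>(domain_chain S)"
    and "least_outside (carrier H) L \<in> \<Union>(range_chain S)"
    using t'(1) unfolding domain_chain_def range_chain_def by blast+
qed

lemma extends_top_piece:
  assumes sub: "\<Union>(domain_chain S) \<subseteq> D'" "\<Union>(range_chain S) \<subseteq> E'"
    and agree: "\<And>x. x \<in> \<Union>(domain_chain S) \<Longrightarrow> f' x = glued_map S x"
    and preserving: "\<And>K L \<phi>. (K, L, \<phi>) \<in> S \<Longrightarrow> coset_preserving G H K L f' D'"
    and new: "least_outside (carrier G) (\<Union>(domain_chain S)) \<in> D' - \<Union>(domain_chain S)"
      "least_outside (carrier H) (\<Union>(range_chain S)) \<in> E'"
    and t: "(K, L, \<phi>) \<in> S"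
  shows "K \<subseteq> D' \<and> \<not> D' \<subseteq> K \<and> extends_piece K L \<phi> D' E' f'"
proof -
  have KD: "K \<subseteq> \<Union>(domain_chain S)" and LE: "L \<subseteq> \<Union>(range_chain S)"
    using t unfolding domain_chain_def range_chain_def by blast+
  have "\<not> D' \<subseteq> K" using new(1) KD by blast
  moreover have "least_outside (carrier G) K \<in> D' \<and> least_outside (carrier H) L \<in> E'"
  proof (cases "K = \<Union>(domain_chain S)")
    case True
    then show ?thesis using new range_eq_if_domain_eq[OF t True] by simp
  next
    case False
    then show ?thesis using least_outside_proper_piece[OF t False] sub by blast
  qed
  moreover have "\<forall>x\<in>K. f' x = \<phi> x"
  proof
    fix x assume "x \<in> K"
    then have "x \<in> \<Union>(domain_chain S)" using KD by blast
    then show "f' x = \<phi> x" using agree glued_map_eq[OF t \<open>x \<in> K\<close>] by simp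
  qed
  ultimately show ?thesis
    unfolding extends_piece_def using KD LE sub preserving[OF t] by blast
qed

lemma coherent_insert_top:
  assumes piece: "piece D' E' f'"
    and below: "\<And>K L \<phi>. (K, L, \<phi>) \<in> S \<Longrightarrow> K \<subseteq> D' \<and> \<not> D' \<subseteq> K \<and> extends_piece K L \<phi> D' E' f'"
  shows "coherent (insert (D', E', f') S)"
proof -
  have "f' ` D' \<subseteq> E'" using piece unfolding piece_def bij_betw_def by blast
  then have top: "extends_piece D' E' f' D' E' f'"
    using coset_preserving_subgroups piece unfolding extends_piece_def piece_def by blast
  have pair: "(K \<subseteq> K' \<or> K' \<subseteq> K) \<and> (K \<subseteq> K' \<longrightarrow> extends_piece K L \<phi> K' L' \<phi>')"
    if t: "(K, L, \<phi>) \<in> insert (D', E', f') S" and t': "(K', L', \<phi>') \<in> insert (D', E', f') S"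
    for K L \<phi> K' L' \<phi>'
  proof -
    consider (old_old) "(K, L, \<phi>) \<in> S" "(K', L', \<phi>') \<in> S"
      | (old_new) "(K, L, \<phi>) \<in> S" "(K', L', \<phi>') = (D', E', f')"
      | (new_old) "(K, L, \<phi>) = (D', E', f')" "(K', L', \<phi>') \<in> S"
      | (new_new) "(K, L, \<phi>) = (D', E', f')" "(K', L', \<phi>') = (D', E', f')"
      using t t' by blast
    then show ?thesis
    proof cases
      case old_old
      then show ?thesis using coherent_chain[OF old_old] coherent_extends[OF old_old] by blast
    next
      case old_new
      then show ?thesis using below[OF old_new(1)] by simp
    next
      case new_old
      then show ?thesis using below[OF new_old(2)] by auto
    next
      case new_new
      then show ?thesis using top by simp
    qed
  qed
  show ?thesis
    unfolding coherent_def
  proof (intro conjI allI impI)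
    show "trivial_piece \<in> insert (D', E', f') S" using trivial_piece_mem by blast
  next
    fix K L \<phi> assume "(K, L, \<phi>) \<in> insert (D', E', f') S"
    then show "piece K L \<phi>" using piece coherent_piece by blast
  next
    fix K L \<phi> K' L' \<phi>'
    assume "(K, L, \<phi>) \<in> insert (D', E', f') S" "(K', L', \<phi>') \<in> insert (D', E', f') S"
    then show "K \<subseteq> K' \<or> K' \<subseteq> K" using pair by blast
  next
    fix K L \<phi> K' L' \<phi>'
    assume "(K, L, \<phi>) \<in> insert (D', E', f') S" "(K', L', \<phi>') \<in> insert (D', E', f') S" "K \<subseteq> K'"
    then show "extends_piece K L \<phi> K' L' \<phi>'" using pair by blast
  qed
qed

end

text \<open>D \<times> \<nat> serves as the number of new cosets on both sides: it is infinite, at least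
  |D| = |E|, and still below \<gamma> because \<gamma> is uncountable and regular.\<close>

lemma piece_extension:
  assumes D: "subgroup D G" "|D| <o |carrier G|" and E: "subgroup E H" and f: "bij_betw f D E"
    and g: "g \<in> carrier G" and h: "h \<in> carrier H"
  obtains D' E' f' where "piece D' E' f'" "D \<subseteq> D'" "E \<subseteq> E'" "g \<in> D'" "h \<in> E'"
    "\<And>x. x \<in> D \<Longrightarrow> f' x = f x"
    "\<And>K L. K \<subseteq> D \<Longrightarrow> L \<subseteq> E \<Longrightarrow> coset_preserving G H K L f D \<Longrightarrow>
       coset_preserving G H K L f' D'"
proof -
  have E_small: "|E| <o |carrier H|" using bij_betw_small_iff[OF f] D(2) by blast
  have "D \<noteq> {}" "E \<noteq> {}" using subgroup.one_closed D(1) E by blast+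
  let ?M = "D \<times> (UNIV :: nat set)" and ?N = "E \<times> (UNIV :: nat set)"
  have M: "infinite ?M" "|D| \<le>o |?M|" "|?M| <o |carrier G|"
    using \<open>D \<noteq> {}\<close> stable_elim[OF stable_G D(2) uncountable_G]
    by (auto simp: finite_cartesian_product_iff intro: card_of_Times1)
  have N: "infinite ?N" "|E| \<le>o |?N|" "|?N| <o |carrier H|"
    using \<open>E \<noteq> {}\<close> stable_elim[OF stable_H E_small uncountable_H]
    by (auto simp: finite_cartesian_product_iff intro: card_of_Times1)
  obtain D' where D': "subgroup D' G" "D \<subseteq> D'" "g \<in> D'" "|D'| <o |carrier G|"
    "|(\<lambda>x. x <#\<^bsub>G\<^esub> D) ` D'| =o |?M|"
    using G.small_subgroup_extension[OF stable_G D g M] by blast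
  obtain E' where E': "subgroup E' H" "E \<subseteq> E'" "h \<in> E'"
    "|(\<lambda>y. y <#\<^bsub>H\<^esub> E) ` E'| =o |?N|"
    using H.small_subgroup_extension[OF stable_H E(1) E_small h N] by blast
  have "|?M| =o |?N|" using bij_betw_map_prod[OF f bij_betw_id] by (rule card_of_ordIsoI)
  then have "|(\<lambda>x. x <#\<^bsub>G\<^esub> D) ` D'| =o |(\<lambda>y. y <#\<^bsub>H\<^esub> E) ` E'|"
    using D'(5) E'(4) by (metis ordIso_symmetric ordIso_transitive)
  then obtain c0 where c0: "bij_betw c0 ((\<lambda>x. x <#\<^bsub>G\<^esub> D) ` D') ((\<lambda>y. y <#\<^bsub>H\<^esub> E) ` E')"
    unfolding card_of_ordIso[symmetric] by blast
  have "D \<in> (\<lambda>x. x <#\<^bsub>G\<^esub> D) ` D'" "E \<in> (\<lambda>y. y <#\<^bsub>H\<^esub> E) ` E'"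
    using subgroup.one_closed[OF D'(1)] subgroup.one_closed[OF E'(1)]
      G.lcos_mult_one[OF subgroup.subset[OF D(1)]] H.lcos_mult_one[OF subgroup.subset[OF E(1)]]
    by (metis image_eqI)+
  then obtain c where c: "bij_betw c ((\<lambda>x. x <#\<^bsub>G\<^esub> D) ` D') ((\<lambda>y. y <#\<^bsub>H\<^esub> E) ` E')" "c D = E"
    using bij_betw_fixing_point[OF c0] by blast
  obtain f' where f': "bij_betw f' D' E'" "\<And>x. x \<in> D \<Longrightarrow> f' x = f x"
    "\<And>K L. K \<subseteq> D \<Longrightarrow> L \<subseteq> E \<Longrightarrow> coset_preserving G H K L f D \<Longrightarrow>
       coset_preserving G H K L f' D'"
    using coset_preserving_extension[OF G.is_group H.is_group D(1) D'(1,2) E(1) E'(1,2) f c]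
    by blast
  have "piece D' E' f'" unfolding piece_def using D'(1,4) E'(1) f'(1) by blast
  then show thesis using that D'(2,3) E'(2,3) f'(2,3) by blast
qed

lemma coherent_extend:
  assumes S: "coherent S" and small: "|\<Union>(domain_chain S)| <o |carrier G|"
  obtains S' where "coherent S'" "S \<subset> S'"
proof -
  let ?D = "\<Union>(domain_chain S)" and ?E = "\<Union>(range_chain S)" and ?f = "glued_map S"
  let ?g = "least_outside (carrier G) ?D" and ?h = "least_outside (carrier H) ?E"
  have D: "subgroup ?D G" by (rule subgroup_Union_domain_chain[OF S])
  have E: "subgroup ?E H" by (rule subgroup_Union_range_chain[OF S])
  have f: "bij_betw ?f ?D ?E" by (rule bij_betw_glued_map[OF S])
  have E_small: "|?E| <o |carrier H|" using bij_betw_small_iff[OF f] small by blast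
  have g: "?g \<in> carrier G - ?D" by (rule least_outside_mem_if_ordLess[OF subgroup.subset[OF D] small])
  have h: "?h \<in> carrier H - ?E" by (rule least_outside_mem_if_ordLess[OF subgroup.subset[OF E] E_small])
  obtain D' E' f' where ext: "piece D' E' f'" "?D \<subseteq> D'" "?E \<subseteq> E'" "?g \<in> D'" "?h \<in> E'"
    "\<And>x. x \<in> ?D \<Longrightarrow> f' x = ?f x"
    "\<And>K L. K \<subseteq> ?D \<Longrightarrow> L \<subseteq> ?E \<Longrightarrow> coset_preserving G H K L ?f ?D \<Longrightarrow>
       coset_preserving G H K L f' D'"
    using piece_extension[OF D small E f DiffD1[OF g] DiffD1[OF h]] by blast
  have preserving: "coset_preserving G H K L f' D'" if t: "(K, L, \<phi>) \<in> S" for K L \<phi>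
  proof (rule ext(7))
    show "K \<subseteq> ?D" "L \<subseteq> ?E" using t unfolding domain_chain_def range_chain_def by blast+
    show "coset_preserving G H K L ?f ?D" by (rule coset_preserving_glued_map[OF S t])
  qed
  have new: "?g \<in> D' - ?D" using g ext(4) by blast
  have "coherent (insert (D', E', f') S)"
    using coherent_insert_top[OF S ext(1) extends_top_piece[OF S ext(2,3,6) preserving new ext(5)]] .
  moreover have "(D', E', f') \<notin> S"
  proof
    assume "(D', E', f') \<in> S"
    then have "D' \<subseteq> ?D" unfolding domain_chain_def by blast
    then show False using g ext(4) by blast
  qed
  ultimately show thesis using that by blast
qed

lemma coherent_Union_chain:
  assumes "\<C> \<noteq> {}" and chain: "subset.chain {S. coherent S} \<C>"
  shows "coherent (\<Union>\<C>)"
proof -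
  have members: "\<And>S. S \<in> \<C> \<Longrightarrow> coherent S"
    and comparable: "\<And>S S'. S \<in> \<C> \<Longrightarrow> S' \<in> \<C> \<Longrightarrow> S \<subseteq> S' \<or> S' \<subseteq> S"
    using chain unfolding subset.chain_def by blast+
  have common: "\<exists>S\<in>\<C>. p \<in> S \<and> q \<in> S" if pq: "p \<in> \<Union>\<C>" "q \<in> \<Union>\<C>" for p q
  proof -
    obtain S S' where "S \<in> \<C>" "p \<in> S" "S' \<in> \<C>" "q \<in> S'" using pq by blast
    then show ?thesis using comparable[of S S'] by blast
  qed
  show ?thesis
    unfolding coherent_def
  proof (intro conjI allI impI)
    show "trivial_piece \<in> \<Union>\<C>" using assms(1) members trivial_piece_mem by blast
  next
    fix K L \<phi> assume "(K, L, \<phi>) \<in> \<Union>\<C>"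
    then show "piece K L \<phi>" using members coherent_piece by blast
  next
    fix K L \<phi> K' L' \<phi>' assume "(K, L, \<phi>) \<in> \<Union>\<C>" "(K', L', \<phi>') \<in> \<Union>\<C>"
    then obtain S where S: "S \<in> \<C>" and t: "(K, L, \<phi>) \<in> S" "(K', L', \<phi>') \<in> S"
      using common by blast
    show "K \<subseteq> K' \<or> K' \<subseteq> K" using coherent_chain[OF members[OF S] t] .
  next
    fix K L \<phi> K' L' \<phi>' assume "(K, L, \<phi>) \<in> \<Union>\<C>" "(K', L', \<phi>') \<in> \<Union>\<C>" "K \<subseteq> K'"
    then obtain S where S: "S \<in> \<C>" and t: "(K, L, \<phi>) \<in> S" "(K', L', \<phi>') \<in> S"
      using common by blast
    show "extends_piece K L \<phi> K' L' \<phi>'" using coherent_extends[OF members[OF S] t \<open>K \<subseteq> K'\<close>] .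
  qed
qed

lemma exists_maximal_coherent: "\<exists>M. coherent M \<and> (\<forall>S. coherent S \<and> M \<subseteq> S \<longrightarrow> S = M)"
proof -
  have "\<exists>M\<in>{S. coherent S}. \<forall>S\<in>{S. coherent S}. M \<subseteq> S \<longrightarrow> S = M"
    by (rule subset_Zorn_nonempty) (use coherent_trivial coherent_Union_chain in blast)+
  then show ?thesis by blast
qed

lemma coherent_exhausting:
  obtains M where "coherent M" "\<Union>(domain_chain M) = carrier G" "\<Union>(range_chain M) = carrier H"
proof -
  obtain M where M: "coherent M" and maximal: "\<And>S. coherent S \<Longrightarrow> M \<subseteq> S \<Longrightarrow> S = M"
    using exists_maximal_coherent by blast
  have not_small: "\<not> |\<Union>(domain_chain M)| <o |carrier G|"
  proof
    assume "|\<Union>(domain_chain M)| <o |carrier G|"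
    then obtain S where "coherent S" "M \<subset> S" by (rule coherent_extend[OF M])
    then show False using maximal by blast
  qed
  have "\<Union>(domain_chain M) = carrier G"
    using card_of_Union_domain_chain_ordLess[OF M] not_small by blast
  moreover have "\<Union>(range_chain M) = carrier H"
    using card_of_Union_range_chain_ordLess[OF M] bij_betw_small_iff[OF bij_betw_glued_map[OF M]]
      not_small by blast
  ultimately show thesis using that M by blast
qed

lemma group_balleans_asymorphic: "group_balleans_asymorphic G H"
proof -
  obtain M where M: "coherent M"
    and domain: "\<Union>(domain_chain M) = carrier G" and range: "\<Union>(range_chain M) = carrier H"
    by (rule coherent_exhausting)
  define f where "f = glued_map M"
  have f: "bij_betw f (carrier G) (carrier H)"
    using bij_betw_glued_map[OF M] domain range unfolding f_def by simp
  have pieces: "subgroup K G \<and> |K| <o |carrier G| \<and> subgroup L H \<and> |L| <o |carrier H| \<and>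
      coset_preserving G H K L f (carrier G)" if "(K, L, \<phi>) \<in> M" for K L \<phi>
    using coherent_piece[OF M that] piece_range_small[OF M that]
      coset_preserving_glued_map[OF M that] domain
    unfolding piece_def f_def by simp
  have "prec_mapping (carrier G) (group_ballean_F G) (group_ballean_B G)
      (carrier H) (group_ballean_F H) (group_ballean_B H) f"
  proof (rule prec_mapping_group_balleanI[OF G.is_group H.is_group stable_G
        bij_betw_imp_funcset[OF f] chain_domain_chain[OF M] domain])
    fix K assume "K \<in> domain_chain M"
    then obtain L \<phi> where "(K, L, \<phi>) \<in> M" unfolding domain_chain_def by blast
    then show "\<exists>L. subgroup K G \<and> |K| <o |carrier G| \<and> subgroup L H \<and> |L| <o |carrier H| \<and>
        coset_preserving G H K L f (carrier G)" using pieces by blast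
  qed
  moreover have "prec_mapping (carrier H) (group_ballean_F H) (group_ballean_B H)
      (carrier G) (group_ballean_F G) (group_ballean_B G) (inv_into (carrier G) f)"
  proof (rule prec_mapping_group_balleanI[OF H.is_group G.is_group stable_H
        bij_betw_imp_funcset[OF bij_betw_inv_into[OF f]] chain_range_chain[OF M] range])
    fix L assume "L \<in> range_chain M"
    then obtain K \<phi> where "(K, L, \<phi>) \<in> M" unfolding range_chain_def by blast
    then show "\<exists>K. subgroup L H \<and> |L| <o |carrier H| \<and> subgroup K G \<and> |K| <o |carrier G| \<and>
        coset_preserving H G L K (inv_into (carrier G) f) (carrier H)"
      using pieces coset_preserving_inv_into[OF f] by blast
  qed
  ultimately show ?thesis
    unfolding group_balleans_asymorphic_def asymorphic_def asymorphism_def using f by blast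
qed

end

theorem theorem3:
  fixes G :: "('a, 'm) monoid_scheme" and H :: "('b, 'n) monoid_scheme"
  assumes "group G" and "group H"
    and "\<not> countable (carrier G)" and "\<not> countable (carrier H)"
    and "(card_of (carrier G), card_of (carrier H)) \<in> ordIso"
    and "regularCard (card_of (carrier G))"
  shows "group_balleans_asymorphic G H"
proof -
  have "infinite (carrier G)" using assms(3) countable_finite by blast
  then have "stable |carrier G|"
    using regularCard_stable[OF card_of_Card_order _ assms(6)] by (simp add: Field_card_of)
  moreover have "|UNIV :: nat set| <o |carrier G|"
    using assms(3) by (rule nat_card_of_ordLess_if_uncountable)
  ultimately interpret regular_groups G H
    using assms(1,2,5) by (intro regular_groups.intro regular_groups_axioms.intro)
  show ?thesis by (rule group_balleans_asymorphic)
qed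

end
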